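(* Let $\varphi=\ell(p_1)\wedge\dots\wedge\ell(p_n)$, where the $p_i\in At$ are distinct and each $\ell(p_i)\in\{p_i,\neg p_i\}$. Let $(\mathcal{M},w)$ be a pointed Kripke model with $(\mathcal{M},w)\vDash\varphi$, and let $a\in Ag$. Let $S\subseteq At(\varphi)$ be the unique set such that $(\mathcal{M},w)\vDash\bigwedge_{p\in S}\mathsf{h}_a p\wedge\bigwedge_{p\in At(\varphi)\setminus S}\neg\mathsf{h}_a p$, and let $\varphi_S=\bigwedge_{p\in S}\ell(p)$. Then $\mathcal{F}(\varphi)$ and $\mathcal{F}(\varphi_S)$ are both applicable in $(\mathcal{M},w)$. Write $(\mathcal{M},w)\otimes\mathcal{F}(\varphi)=(\mathcal{M}^\varphi,(w,e))$ with $\mathcal{M}^\varphi=(W^\varphi,R^\varphi,V^\varphi)$, and $(\mathcal{M},w)\otimes\mathcal{F}(\varphi_S)=(\mathcal{M}^{\varphi_S},(w,e'))$ with $\mathcal{M}^{\varphi_S}=(W^{\varphi_S},R^{\varphi_S},V^{\varphi_S})$. Then: (1) $R^\varphi_a[(w,e)]=R^{\varphi_S}_a[(w,e')]$; (2) for every $(v,f)\in R^\varphi_a[(w,e)]$, the pointed models $(\mathcal{M}^\varphi,(v,f))$ and $(\mathcal{M}^{\varphi_S},(v,f))$ are bisimilar.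
   Context: $Ag$ is a finite set of agents and $At$ a finite set of propositional atoms. $H=\{\mathsf{h}_a p: a\in Ag, p\in At\}$ is the set of attention atoms; $\mathsf{h}_a p$ reads "$a$ pays attention to whether $p$". Language $\mathcal{L}$: $\varphi::=\top\mid p\mid \mathsf{h}_a p\mid\neg\varphi\mid\varphi\wedge\varphi\mid B_a\varphi\mid[\mathcal{E}]\varphi$, with $\mathcal{E}$ a multi-pointed event model. $At(\varphi)$ is the set of atoms of $At$ occurring in $\varphi$. Conjunctions of literals: - Literals are atoms in $At\cup H\cup\{\top\}$ or their negations. - Conjunctions of literals are kept in a normal form: each atom occurs at most once; $\top$ is not a conjunct unless the formula is $\top$; the order is fixed. The empty conjunction is $\top$. - For a conjunction of literals $e$, "$\ell\in e$" means $\ell$ is a conjunct of $e$. Kripke models: - A Kripke model is $\mathcal{M}=(W,R,V)$ with $W$ finite nonempty, $R_a\subseteq W^2$ for each $a$, and $V:W\to\mathcal{P}(At\cup H)$. - For a relation $R_a$ and a state $x$, $R_a[x]=\{y:(x,y)\in R_a\}$. Event models: - An event model is $(E,Q,pre)$ with $E$ finite nonempty, $Q_a\subseteq E^2$ for each $a$, and $pre:E\to\mathcal{L}$. A multi-pointed event model adds $E_d\subseteq E$. - Product update: $\mathcal{M}\otimes\mathcal{E}=(W',R',V')$ where $W'=\{(w,e):(\mathcal{M},w)\vDash pre(e)\}$, $R'_a=\{((w,e),(v,f))\in W'^2:(w,v)\in R_a,(e,f)\in Q_a\}$, and $V'((w,e))=V(w)$. - $(\mathcal{E},E_d)$ is applicable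 in $(\mathcal{M},w)$ iff there is a unique $e\in E_d$ with $(\mathcal{M},w)\vDash pre(e)$. In that case $(\mathcal{M},w)\otimes(\mathcal{E},E_d)=(\mathcal{M}\otimes\mathcal{E},(w,e))$. Satisfaction: - $q\in At\cup H$ holds at $w$ iff $q\in V(w)$; Boolean connectives are standard. - $B_a\varphi$ holds at $w$ iff $\varphi$ holds at all $R_a$-successors of $w$. - $[\mathcal{E}]\varphi$ holds at $(\mathcal{M},w)$ iff, if $\mathcal{E}$ is applicable in $(\mathcal{M},w)$, then $(\mathcal{M},w)\otimes\mathcal{E}\vDash\varphi$. Propositional attention event model $\mathcal{F}(\varphi)$, for $\varphi=\ell(p_1)\wedge\dots\wedge\ell(p_n)$ as in the claim (including $\varphi=\top$ when $n=0$): - It is $((E,Q,id_E),E_d)$, so each event is a formula and is its own precondition. - Events: $E$ is the set of all normal-form conjunctions $\bigwedge_{p\in S'}\ell(p)\wedge\bigwedge_{b\in Ag}\big(\bigwedge_{p\in X_b}\mathsf{h}_b p\wedge\bigwedge_{p\in S'\setminus X_b}\neg\mathsf{h}_b p\big)$, for $S'\subseteq At(\varphi)$ and $X_b\subseteq S'$ for each $b\in Ag$. - Relations: $(e,f)\in Q_b$ iff for all $p\in At(\varphi)$ both of the following hold: - (Attentiveness) if $\mathsf{h}_b p\in e$ then $\mathsf{h}_b p\in f$ and $\ell(p)\in f$; - (Inertia) if $\mathsf{h}_b p\notin e$ then $\ell(p)\notin f$. - Designated events: $E_d$ is the set of events containing every literal of $\varphi$. Bisimulation is the standard notion for Kripke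 models over all agents in $Ag$ and atoms in $At\cup H$: agreement on atoms, plus forth and back conditions for each $R_a$. *)

theory Defs
  imports Main
begin

text \<open>Propositional atoms p and attention atoms h_a p.\<close>
datatype ('ag, 'at) patom = P 'at | H 'ag 'at

text \<open>A normal-form conjunction of literals over At \<union> H: each atom occurs at most once,
  with a fixed polarity. It is represented by the partial map sending an atom to
  Some True (positive literal), Some False (negated literal) or None (does not occur).
  The empty conjunction (\<lambda>_. None) is \<top>. "l \<in> e" for l = (x, b) means e x = Some b.\<close>
type_synonym ('ag, 'at) lconj = "('ag, 'at) patom \<Rightarrow> bool option"

record ('ag, 'at, 'w) kmodel =
  kW :: "'w set"
  kR :: "'ag \<Rightarrow> ('w \<times> 'w) set"
  kV :: "'w \<Rightarrow> ('ag, 'at) patom set"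

definition kripke :: "('ag, 'at, 'w) kmodel \<Rightarrow> bool" where
  "kripke M \<longleftrightarrow> finite (kW M) \<and> kW M \<noteq> {} \<and> (\<forall>a. kR M a \<subseteq> kW M \<times> kW M)"

definition succs :: "('w \<times> 'w) set \<Rightarrow> 'w \<Rightarrow> 'w set" where
  "succs R x = {y. (x, y) \<in> R}"

definition sat_lc :: "('ag, 'at, 'w) kmodel \<Rightarrow> 'w \<Rightarrow> ('ag, 'at) lconj \<Rightarrow> bool" where
  "sat_lc M w e \<longleftrightarrow> (\<forall>x b. e x = Some b \<longrightarrow> (x \<in> kV M w \<longleftrightarrow> b))"

text \<open>Multi-pointed event models whose preconditions are conjunctions of literals.\<close>
record ('ag, 'at, 'e) evmodel =
  eE :: "'e set"
  eQ :: "'ag \<Rightarrow> ('e \<times> 'e) set"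
  epre :: "'e \<Rightarrow> ('ag, 'at) lconj"
  eEd :: "'e set"

definition product :: "('ag, 'at, 'w) kmodel \<Rightarrow> ('ag, 'at, 'e) evmodel \<Rightarrow> ('ag, 'at, 'w \<times> 'e) kmodel" where
  "product M Ev =
    (let W' = {(w, e). w \<in> kW M \<and> e \<in> eE Ev \<and> sat_lc M w (epre Ev e)} in
     \<lparr> kW = W',
       kR = (\<lambda>a. {((w, e), (v, f)). (w, e) \<in> W' \<and> (v, f) \<in> W' \<and> (w, v) \<in> kR M a \<and> (e, f) \<in> eQ Ev a}),
       kV = (\<lambda>(w, e). kV M w) \<rparr>)"

definition applicable :: "('ag, 'at, 'w) kmodel \<Rightarrow> 'w \<Rightarrow> ('ag, 'at, 'e) evmodel \<Rightarrow> bool" where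
  "applicable M w Ev \<longleftrightarrow> (\<exists>!e. e \<in> eEd Ev \<and> sat_lc M w (epre Ev e))"

text \<open>The designated event selected at w (meaningful when applicable); the updated
  pointed model is (product M Ev, (w, upd_point M w Ev)).\<close>
definition upd_point :: "('ag, 'at, 'w) kmodel \<Rightarrow> 'w \<Rightarrow> ('ag, 'at, 'e) evmodel \<Rightarrow> 'e" where
  "upd_point M w Ev = (THE e. e \<in> eEd Ev \<and> sat_lc M w (epre Ev e))"

text \<open>A conjunction of propositional literals l(p_1) \<and> ... \<and> l(p_n) with distinct p_i is
  given by a partial map L :: 'at \<Rightarrow> bool option (L p = Some True: conjunct p;
  Some False: conjunct \<not>p). At(\<phi>) = dom L.\<close>
definition prop_conj :: "('at \<Rightarrow> bool option) \<Rightarrow> ('ag, 'at) lconj" where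
  "prop_conj L = (\<lambda>x. case x of P p \<Rightarrow> L p | H _ _ \<Rightarrow> None)"

text \<open>The events of F(\<phi>): for S' \<subseteq> At(\<phi>) and X_b \<subseteq> S',
  \<And>_{p\<in>S'} l(p) \<and> \<And>_b (\<And>_{p\<in>X_b} h_b p \<and> \<And>_{p\<in>S'-X_b} \<not>h_b p).\<close>
definition att_event :: "('at \<Rightarrow> bool option) \<Rightarrow> 'at set \<Rightarrow> ('ag \<Rightarrow> 'at set) \<Rightarrow> ('ag, 'at) lconj" where
  "att_event L S' X = (\<lambda>x. case x of
      P p \<Rightarrow> (if p \<in> S' then L p else None)
    | H b p \<Rightarrow> (if p \<in> S' then Some (p \<in> X b) else None))"

definition F_events :: "('at \<Rightarrow> bool option) \<Rightarrow> ('ag, 'at) lconj set" where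
  "F_events L = {att_event L S' X | S' X. S' \<subseteq> dom L \<and> (\<forall>b. X b \<subseteq> S')}"

definition F_model :: "('at \<Rightarrow> bool option) \<Rightarrow> ('ag, 'at, ('ag, 'at) lconj) evmodel" where
  "F_model L =
    \<lparr> eE = F_events L,
      eQ = (\<lambda>b. {(e, f). e \<in> F_events L \<and> f \<in> F_events L \<and>
                 (\<forall>p \<in> dom L.
                    (e (H b p) = Some True \<longrightarrow> f (H b p) = Some True \<and> f (P p) = L p) \<and>
                    (e (H b p) \<noteq> Some True \<longrightarrow> f (P p) \<noteq> L p))}),
      epre = id,
      eEd = {e \<in> F_events L. \<forall>p \<in> dom L. e (P p) = L p} \<rparr>"

definition bisimilar :: "('ag, 'at, 'w) kmodel \<Rightarrow> 'w \<Rightarrow> ('ag, 'at, 'v) kmodel \<Rightarrow> 'v \<Rightarrow> bool" where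
  "bisimilar M w N v \<longleftrightarrow>
    (\<exists>Z. Z \<subseteq> kW M \<times> kW N \<and> (w, v) \<in> Z \<and>
      (\<forall>(x, y) \<in> Z. kV M x = kV N y \<and>
         (\<forall>a x'. (x, x') \<in> kR M a \<longrightarrow> (\<exists>y'. (y, y') \<in> kR N a \<and> (x', y') \<in> Z)) \<and>
         (\<forall>a y'. (y, y') \<in> kR N a \<longrightarrow> (\<exists>x'. (x, x') \<in> kR M a \<and> (x', y') \<in> Z))))"

end

theory Submission
  imports Defs
begin

text \<open>The designated event of F(\<phi>) at w is forced: it consists of all literals of \<phi> together with
  the values at w of all attention atoms h_b p, p \<in> At(\<phi>). The events of F(\<phi>_S) are exactly the
  events of F(\<phi>) mentioning only atoms of S, and on them the relations of both event models agree:
  from an event that does not mention p, Inertia excludes l(p) from every successor. Hence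
  M \<otimes> F(\<phi>_S) is a generated submodel of M \<otimes> F(\<phi>), and the identity on it is a bisimulation.
  Finally, the a-successors of an event depend only on which atoms h_a p it makes true, and the
  designated events of F(\<phi>) and F(\<phi>_S) agree on these precisely because S is a's attention set at w.\<close>

lemma F_events_iff:
  "g \<in> F_events L \<longleftrightarrow>
    (\<forall>p. (p \<in> dom L \<and> g (P p) = L p \<and> (\<forall>b. g (H b p) \<noteq> None)) \<or>
         (g (P p) = None \<and> (\<forall>b. g (H b p) = None)))"
proof
  assume "g \<in> F_events L"
  then obtain S' X where "S' \<subseteq> dom L" "\<forall>b. X b \<subseteq> S'" "g = att_event L S' X"
    unfolding F_events_def by blast
  then show "\<forall>p. (p \<in> dom L \<and> g (P p) = L p \<and> (\<forall>b. g (H b p) \<noteq> None)) \<or>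
         (g (P p) = None \<and> (\<forall>b. g (H b p) = None))"
    by (auto simp: att_event_def)
next
  assume g: "\<forall>p. (p \<in> dom L \<and> g (P p) = L p \<and> (\<forall>b. g (H b p) \<noteq> None)) \<or>
         (g (P p) = None \<and> (\<forall>b. g (H b p) = None))"
  define S' where "S' = {p. g (P p) \<noteq> None}"
  define X where "X = (\<lambda>b. {p. g (H b p) = Some True})"
  have "g = att_event L S' X"
  proof
    fix x show "g x = att_event L S' X x"
    proof (cases x)
      case (P p)
      then show ?thesis using g[rule_format, of p] by (auto simp: att_event_def S'_def)
    next
      case (H b p)
      have "(p \<in> dom L \<and> g (P p) = L p \<and> g (H b p) \<noteq> None) \<or>
          (g (P p) = None \<and> g (H b p) = None)"
        using g by blast
      with H show ?thesis
        by (cases "g (H b p)") (auto simp: att_event_def S'_def X_def)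
    qed
  qed
  moreover have "S' \<subseteq> dom L"
    using g by (fastforce simp: S'_def)
  moreover have "\<forall>b. X b \<subseteq> S'"
  proof (intro allI subsetI)
    fix b p
    assume "p \<in> X b"
    then have "g (H b p) \<noteq> None" by (simp add: X_def)
    then show "p \<in> S'" using g[rule_format, of p] by (auto simp: S'_def)
  qed
  ultimately show "g \<in> F_events L"
    unfolding F_events_def by blast
qed

lemma F_events_restrict:
  assumes "S \<subseteq> dom L"
  shows "F_events (L |` S) = {g \<in> F_events L. \<forall>p. p \<notin> S \<longrightarrow> g (P p) = None}"
proof -
  have slot: "(p \<in> S \<and> g (P p) = (L |` S) p \<and> A \<or> g (P p) = None \<and> B) \<longleftrightarrow>
      (p \<in> dom L \<and> g (P p) = L p \<and> A \<or> g (P p) = None \<and> B) \<and> (p \<notin> S \<longrightarrow> g (P p) = None)"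
    for g :: "('ag, 'a) lconj" and p A B
    using assms by (auto simp: restrict_map_def)
  have dom_restrict: "dom (L |` S) = S"
    using assms by auto
  show ?thesis
    by (rule set_eqI)
      (simp only: F_events_iff dom_restrict slot all_conj_distrib mem_Collect_eq)
qed

definition designated_event :: "('ag, 'at, 'w) kmodel \<Rightarrow> 'w \<Rightarrow> ('at \<Rightarrow> bool option) \<Rightarrow> ('ag, 'at) lconj" where
  "designated_event M w L = att_event L (dom L) (\<lambda>b. {p \<in> dom L. H b p \<in> kV M w})"

lemma designated_event_in_eEd: "designated_event M w L \<in> eEd (F_model L)"
  by (auto simp: F_model_def F_events_def designated_event_def att_event_def)

lemma sat_lc_designated_event:
  assumes "sat_lc M w (prop_conj L)"
  shows "sat_lc M w (designated_event M w L)"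
  using assms
  by (auto simp: sat_lc_def prop_conj_def designated_event_def att_event_def split: patom.splits if_splits)

lemma designated_event_unique:
  assumes "g \<in> eEd (F_model L)" and "sat_lc M w g"
  shows "g = designated_event M w L"
proof
  fix x
  have g: "g \<in> F_events L" "\<forall>p \<in> dom L. g (P p) = L p"
    using assms(1) by (auto simp: F_model_def)
  note slot = F_events_iff[THEN iffD1, OF g(1), rule_format]
  show "g x = designated_event M w L x"
  proof (cases x)
    case (P p)
    then show ?thesis
      using g(2) slot[of p]
      by (cases "p \<in> dom L") (auto simp: designated_event_def att_event_def domIff)
  next
    case (H b p)
    show ?thesis
    proof (cases "p \<in> dom L")
      case True
      then have "g (H b p) \<noteq> None"
        using g(2) slot[of p] by auto
      then obtain c where c: "g (H b p) = Some c"
        by blast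
      then have "H b p \<in> kV M w \<longleftrightarrow> c"
        using assms(2) by (auto simp: sat_lc_def)
      with c H True show ?thesis
        by (auto simp: designated_event_def att_event_def)
    next
      case False
      then show ?thesis
        using H slot[of p] by (auto simp: designated_event_def att_event_def)
    qed
  qed
qed

lemma applicable_F_model:
  assumes "sat_lc M w (prop_conj L)"
  shows "applicable M w (F_model L)"
    and "upd_point M w (F_model L) = designated_event M w L"
proof -
  have epre: "epre (F_model L) = id"
    by (simp add: F_model_def)
  have "designated_event M w L \<in> eEd (F_model L) \<and>
      sat_lc M w (epre (F_model L) (designated_event M w L))"
    using designated_event_in_eEd sat_lc_designated_event[OF assms] by (simp add: epre)
  moreover have "g = designated_event M w L"
    if "g \<in> eEd (F_model L) \<and> sat_lc M w (epre (F_model L) g)" for g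
    using that designated_event_unique[of g L M w] by (simp add: epre)
  ultimately show "applicable M w (F_model L)" "upd_point M w (F_model L) = designated_event M w L"
    unfolding applicable_def upd_point_def by (blast intro: the_equality)+
qed

lemma eQ_F_model_cong:
  assumes "e \<in> F_events L" and "e' \<in> F_events L"
    and "\<forall>p \<in> dom L. e (H b p) = Some True \<longleftrightarrow> e' (H b p) = Some True"
  shows "(e, f) \<in> eQ (F_model L) b \<longleftrightarrow> (e', f) \<in> eQ (F_model L) b"
  using assms by (auto simp: F_model_def)

lemma F_events_P_neq_iff:
  assumes "f \<in> F_events L" and "p \<in> dom L"
  shows "f (P p) \<noteq> L p \<longleftrightarrow> f (P p) = None"
  using F_events_iff[THEN iffD1, OF assms(1), rule_format, of p] assms(2) by auto

lemma eQ_F_model_restrict: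
  assumes "S \<subseteq> dom L" and "e \<in> F_events (L |` S)"
  shows "(e, f) \<in> eQ (F_model (L |` S)) b \<longleftrightarrow> (e, f) \<in> eQ (F_model L) b"
proof -
  have e: "e \<in> F_events L" "\<forall>p. p \<notin> S \<longrightarrow> e (P p) = None"
    using assms by (auto simp: F_events_restrict)
  have e_H: "e (H b p) = None" if "p \<notin> S" for p
    using F_events_iff[THEN iffD1, OF e(1), rule_format, of p] e(2) that by auto
  have dom_restrict: "dom (L |` S) = S"
    using assms(1) by auto
  show ?thesis
  proof
    assume "(e, f) \<in> eQ (F_model (L |` S)) b"
    then show "(e, f) \<in> eQ (F_model L) b"
      using assms e e_H dom_restrict F_events_P_neq_iff
      by (auto simp: F_model_def F_events_restrict)
  next
    assume Q: "(e, f) \<in> eQ (F_model L) b"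
    then have f: "f \<in> F_events L"
      by (simp add: F_model_def)
    have "f (P p) = None" if "p \<notin> S" for p
    proof (cases "p \<in> dom L")
      case True
      then show ?thesis
        using Q e_H[OF that] F_events_P_neq_iff[OF f True] by (auto simp: F_model_def)
    next
      case False
      then show ?thesis
        using F_events_iff[THEN iffD1, OF f, rule_format, of p] by auto
    qed
    then show "(e, f) \<in> eQ (F_model (L |` S)) b"
      using Q assms e dom_restrict by (auto simp: F_model_def F_events_restrict)
  qed
qed

lemma sat_lc_prop_conj_restrict:
  "sat_lc M w (prop_conj L) \<Longrightarrow> sat_lc M w (prop_conj (L |` S))"
  by (auto simp: sat_lc_def prop_conj_def restrict_map_def split: patom.splits if_splits)

lemma mem_kW_product_iff:
  "(w, e) \<in> kW (product M Ev) \<longleftrightarrow> w \<in> kW M \<and> e \<in> eE Ev \<and> sat_lc M w (epre Ev e)"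
  by (simp add: product_def Let_def)

lemma kR_product_iff:
  "((w, e), (v, f)) \<in> kR (product M Ev) a \<longleftrightarrow>
    (w, e) \<in> kW (product M Ev) \<and> (v, f) \<in> kW (product M Ev) \<and> (w, v) \<in> kR M a \<and> (e, f) \<in> eQ Ev a"
  by (simp add: product_def Let_def)

lemma kR_product_subset: "kR (product M Ev) a \<subseteq> kW (product M Ev) \<times> kW (product M Ev)"
  by (auto simp: product_def Let_def)

lemma kV_product: "kV (product M Ev) (w, e) = kV M w"
  by (simp add: product_def Let_def)

lemma succs_kR_product_cong:
  assumes "(w, e) \<in> kW (product M Ev)" and "(w, e') \<in> kW (product M Ev)"
    and "\<And>f. (e, f) \<in> eQ Ev a \<longleftrightarrow> (e', f) \<in> eQ Ev a"
  shows "succs (kR (product M Ev) a) (w, e) = succs (kR (product M Ev) a) (w, e')"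
  using assms by (auto simp: succs_def kR_product_iff)

lemma bisimilar_generated_submodel:
  assumes "kW N \<subseteq> kW M"
    and "\<And>x. x \<in> kW N \<Longrightarrow> kV M x = kV N x"
    and "\<And>a x y. x \<in> kW N \<Longrightarrow> (x, y) \<in> kR M a \<longleftrightarrow> (x, y) \<in> kR N a"
    and "\<And>a. kR N a \<subseteq> kW N \<times> kW N"
    and "x \<in> kW N"
  shows "bisimilar M x N x"
  unfolding bisimilar_def
  by (rule exI[of _ "Id_on (kW N)"]) (use assms in blast)

lemma designated_event_mem_kW_product:
  assumes "w \<in> kW M" and "sat_lc M w (prop_conj L)"
  shows "(w, designated_event M w L) \<in> kW (product M (F_model L))"
  using assms designated_event_in_eEd[of M w L] sat_lc_designated_event[OF assms(2)]
  by (auto simp: mem_kW_product_iff F_model_def)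

lemma kW_product_F_model_restrict_subset:
  assumes "S \<subseteq> dom L"
  shows "kW (product M (F_model (L |` S))) \<subseteq> kW (product M (F_model L))"
  using assms by (auto simp: mem_kW_product_iff F_model_def F_events_restrict)

lemma kR_product_F_model_restrict_iff:
  assumes "S \<subseteq> dom L" and "x \<in> kW (product M (F_model (L |` S)))"
  shows "(x, y) \<in> kR (product M (F_model L)) b \<longleftrightarrow> (x, y) \<in> kR (product M (F_model (L |` S))) b"
proof -
  obtain u g v h where xy: "x = (u, g)" "y = (v, h)"
    by fastforce
  have g: "g \<in> F_events (L |` S)"
    using assms(2) by (simp add: xy mem_kW_product_iff F_model_def)
  have "(g, h) \<in> eQ (F_model (L |` S)) b \<Longrightarrow> h \<in> F_events (L |` S)"
    by (simp add: F_model_def)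
  then have "(g, h) \<in> eQ (F_model (L |` S)) b \<Longrightarrow>
      y \<in> kW (product M (F_model L)) \<longleftrightarrow> y \<in> kW (product M (F_model (L |` S)))"
    using F_events_restrict[OF assms(1)] by (auto simp: xy mem_kW_product_iff F_model_def)
  then show ?thesis
    using assms(2) kW_product_F_model_restrict_subset[OF assms(1)] eQ_F_model_restrict[OF assms(1) g]
    unfolding xy kR_product_iff by blast
qed

lemma bisimilar_product_F_model_restrict:
  assumes "S \<subseteq> dom L" and "x \<in> kW (product M (F_model (L |` S)))"
  shows "bisimilar (product M (F_model L)) x (product M (F_model (L |` S))) x"
  by (rule bisimilar_generated_submodel[OF _ _ _ _ assms(2)])
    (auto simp: kW_product_F_model_restrict_subset[OF assms(1)]
      kR_product_F_model_restrict_iff[OF assms(1)] kR_product_subset kV_product)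

theorem lemma4p1:
  fixes M :: "('ag :: finite, 'at :: finite, 'w) kmodel"
    and w :: 'w and a :: 'ag
    and L :: "'at \<Rightarrow> bool option"
    and S :: "'at set"
  assumes "kripke M"
    and "w \<in> kW M"
    and "sat_lc M w (prop_conj L)"
    and "S \<subseteq> dom L"
    and "\<forall>p \<in> dom L. (p \<in> S \<longrightarrow> H a p \<in> kV M w) \<and> (p \<notin> S \<longrightarrow> H a p \<notin> kV M w)"
  shows "applicable M w (F_model L) \<and> applicable M w (F_model (L |` S)) \<and>
    (let e = upd_point M w (F_model L);
         e' = upd_point M w (F_model (L |` S));
         M1 = product M (F_model L);
         M2 = product M (F_model (L |` S))
     in succs (kR M1 a) (w, e) = succs (kR M2 a) (w, e') \<and>
        (\<forall>vf \<in> succs (kR M1 a) (w, e). bisimilar M1 vf M2 vf))"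
proof -
  define M1 where "M1 = product M (F_model L)"
  define M2 where "M2 = product M (F_model (L |` S))"
  define e where "e = designated_event M w L"
  define e' where "e' = designated_event M w (L |` S)"
  note sat' = sat_lc_prop_conj_restrict[OF assms(3)]
  have e_M1: "(w, e) \<in> kW M1" and e'_M2: "(w, e') \<in> kW M2"
    using designated_event_mem_kW_product[OF assms(2)] assms(3) sat'
    by (simp_all add: M1_def M2_def e_def e'_def)
  have e'_M1: "(w, e') \<in> kW M1"
    using e'_M2 kW_product_F_model_restrict_subset[OF assms(4)] by (auto simp: M1_def M2_def)
  have "\<forall>p \<in> dom L. e (H a p) = Some True \<longleftrightarrow> e' (H a p) = Some True"
    using assms(4,5) by (auto simp: e_def e'_def designated_event_def att_event_def)
  then have "succs (kR M1 a) (w, e) = succs (kR M1 a) (w, e')"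
    using e_M1 e'_M1 unfolding M1_def
    by (intro succs_kR_product_cong eQ_F_model_cong) (auto simp: mem_kW_product_iff F_model_def)
  also have "\<dots> = succs (kR M2 a) (w, e')"
    using kR_product_F_model_restrict_iff[OF assms(4) e'_M2[unfolded M2_def]]
    by (auto simp: succs_def M1_def M2_def)
  finally have succs_eq: "succs (kR M1 a) (w, e) = succs (kR M2 a) (w, e')" .
  have "vf \<in> kW M2" if "vf \<in> succs (kR M2 a) (w, e')" for vf
    using that kR_product_subset[of M "F_model (L |` S)" a] unfolding succs_def M2_def by blast
  then have "bisimilar M1 vf M2 vf" if "vf \<in> succs (kR M2 a) (w, e')" for vf
    using that bisimilar_product_F_model_restrict[OF assms(4)] unfolding M1_def M2_def by blast
  then show ?thesis
    using applicable_F_model[OF assms(3)] applicable_F_model[OF sat'] succs_eq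
    by (simp add: Let_def M1_def M2_def e_def e'_def)
qed

end
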